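(* Let $G_1=(V_1,E_1)$ and $G_2=(V_2,E_2)$ be finite simple graphs with $G_1$ a minor of $G_2$, obtained from $G_2$ by deleting the edge set $E_2^d$ and contracting the edge set $E_2^c$ as described in the context. Let $A$ be an incidence matrix on $\mathcal D(G_2)$ such that $A_{d_1,d_2}=0$ whenever $d_1$ or $d_2$ is a dart $(v,e)$ with $e\in E_2^d$. Let $K$ be the set of darts $(v,e)\in V_{\mathcal D}(G_2)$ with $e\in E_2^c\cup E_2^d$ and $\bar K=V_{\mathcal D}(G_2)\setminus K$. Then $\bar K$ can be identified with $V_{\mathcal D}(G_1)$ (via $(x,e)\mapsto$ (image of $x$, image of $e$)), and the antisymmetric matrix $A^{\bar K}$ indexed by $\bar K$ with entries $(A^{\bar K})_{i,j}=-(A^{\bar K})_{j,i}=\operatorname{Pf}(A_{K\cup\{i,j\}})$ for $i<j$ in $\bar K$ is an incidence matrix on $\mathcal D(G_1)$.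
   Context: The dart graph $\mathcal D(G)$ of $G=(V,E)$ has vertex set $V_{\mathcal D}(G)=\{(v,e)\in V\times E: v\text{ incident with }e\}$, two distinct darts $(v,e),(v',e')$ being adjacent iff $v=v'$ or $e=e'$. Fix a total order on $V_{\mathcal D}(G_2)$; subsets of indices carry the induced order. An incidence matrix on $\mathcal D(G)$ is an antisymmetric complex matrix indexed by $V_{\mathcal D}(G)$ with $A_{d,d'}=0$ whenever $\{d,d'\}$ is not an edge of $\mathcal D(G)$. For a set of indices $L$, $A_L=(A_{i,j})_{i,j\in L}$ is the principal submatrix, and $\operatorname{Pf}$ is the Pfaffian. Minor transformation: $E_2^d,E_2^c\subseteq E_2$ are disjoint, $(V_2,E_2^c)$ contains no cycle, each connected component of $(V_2,E_2^c)$ is contracted to a single vertex of $G_1$ (a surjection $V_2\to V_1$), and the edges of $E_2\setminus(E_2^c\cup E_2^d)$ correspond bijectively to $E_1$, an edge $\{x,y\}$ corresponding to the edge of $G_1$ joining the images of $x$ and $y$. *)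

theory Defs
  imports Complex_Main "HOL-Combinatorics.Permutations"
begin

definition simple_graph :: "'v set \<Rightarrow> 'v set set \<Rightarrow> bool" where
  "simple_graph V E \<longleftrightarrow> finite V \<and>
     (\<forall>e\<in>E. \<exists>x y. x \<noteq> y \<and> x \<in> V \<and> y \<in> V \<and> e = {x, y})"

definition has_cycle :: "'v set \<Rightarrow> 'v set set \<Rightarrow> bool" where
  "has_cycle V F \<longleftrightarrow> (\<exists>vs. length vs \<ge> 3 \<and> distinct vs \<and> set vs \<subseteq> V \<and>
     (\<forall>i<length vs. {vs ! i, vs ! ((i + 1) mod length vs)} \<in> F))"

definition same_component :: "'v set \<Rightarrow> 'v set set \<Rightarrow> 'v \<Rightarrow> 'v \<Rightarrow> bool" where
  "same_component V F x y \<longleftrightarrow>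
     (x, y) \<in> ({(a, b). a \<in> V \<and> b \<in> V \<and> {a, b} \<in> F})\<^sup>*"

definition minor_transformation ::
  "'v set \<Rightarrow> 'v set set \<Rightarrow> 'w set \<Rightarrow> 'w set set \<Rightarrow> 'v set set \<Rightarrow> 'v set set \<Rightarrow> ('v \<Rightarrow> 'w) \<Rightarrow> bool" where
  "minor_transformation V2 E2 V1 E1 Ed Ec phi \<longleftrightarrow>
     Ed \<subseteq> E2 \<and> Ec \<subseteq> E2 \<and> Ed \<inter> Ec = {} \<and>
     \<not> has_cycle V2 Ec \<and>
     phi ` V2 = V1 \<and>
     (\<forall>x\<in>V2. \<forall>y\<in>V2. phi x = phi y \<longleftrightarrow> same_component V2 Ec x y) \<and>
     bij_betw (\<lambda>e. phi ` e) (E2 - (Ec \<union> Ed)) E1"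

definition darts :: "'v set \<Rightarrow> 'v set set \<Rightarrow> ('v \<times> 'v set) set" where
  "darts V E = {(v, e). v \<in> V \<and> e \<in> E \<and> v \<in> e}"

definition dart_adj :: "('v \<times> 'v set) \<Rightarrow> ('v \<times> 'v set) \<Rightarrow> bool" where
  "dart_adj d d' \<longleftrightarrow> d \<noteq> d' \<and> (fst d = fst d' \<or> snd d = snd d')"

definition incidence_matrix ::
  "'v set \<Rightarrow> 'v set set \<Rightarrow> (('v \<times> 'v set) \<Rightarrow> ('v \<times> 'v set) \<Rightarrow> complex) \<Rightarrow> bool" where
  "incidence_matrix V E A \<longleftrightarrow>
     (\<forall>d\<in>darts V E. \<forall>d'\<in>darts V E. A d d' = - A d' d) \<and>
     (\<forall>d\<in>darts V E. \<forall>d'\<in>darts V E. \<not> dart_adj d d' \<longrightarrow> A d d' = 0)"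

text \<open>The total order on indices is given by an injective rank function r (d < d' iff r d < r d').
  pf r A L is the Pfaffian of the principal submatrix A_L with the induced order:
  Pf = 1/(2^n n!) * sum over sigma in S_2n of sgn(sigma) * prod_i A(x_sigma(2i), x_sigma(2i+1)),
  where x_0 < ... < x_(2n-1) lists L in increasing order; 0 if card L is odd.\<close>
definition pf :: "('a \<Rightarrow> nat) \<Rightarrow> ('a \<Rightarrow> 'a \<Rightarrow> complex) \<Rightarrow> 'a set \<Rightarrow> complex" where
  "pf r A L = (let xs = sorted_key_list_of_set r L; m = card L; n = m div 2 in
     if odd m then 0 else
     (1 / (2 ^ n * fact n)) *
       (\<Sum>\<sigma>\<in>{\<sigma>. \<sigma> permutes {..<m}}.
          of_int (sign \<sigma>) * (\<Prod>i<n. A (xs ! \<sigma> (2 * i)) (xs ! \<sigma> (2 * i + 1)))))"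

definition pf_reduced :: "('a \<Rightarrow> nat) \<Rightarrow> ('a \<Rightarrow> 'a \<Rightarrow> complex) \<Rightarrow> 'a set \<Rightarrow> 'a \<Rightarrow> 'a \<Rightarrow> complex" where
  "pf_reduced r A K i j =
     (if r i < r j then pf r A (K \<union> {i, j})
      else if r j < r i then - pf r A (K \<union> {i, j}) else 0)"

end

theory Submission
  imports Defs
begin

text \<open>Kept edges of G2 correspond bijectively to the edges of G1, and on a kept edge the
  contraction map is injective; this identifies Kbar with the darts of G1. For darts i, j whose
  images are not adjacent, consider the darts in K \<union> {i, j} that avoid deleted edges and sit over
  the image vertex of i. A nonzero entry of A joins two darts at one vertex of G2 or on one edge;
  a contracted edge stays over one vertex of G1 and a kept edge carries no such dart besides i and j,
  so A never joins this class to the rest. The class consists of i and two darts per contracted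
  edge, hence is odd, and every matching in the Pfaffian of A over K \<union> {i, j} has a zero factor.\<close>

lemma even_card_if_pairs_agree:
  fixes n :: nat
  assumes "\<And>k. k < n \<Longrightarrow> P (2 * k) = P (2 * k + 1)"
  shows "even (card {t. t < 2 * n \<and> P t})"
  using assms
proof (induction n)
  case 0
  then show ?case by simp
next
  case (Suc n)
  have "{t. t < 2 * Suc n \<and> P t} =
      {t. t < 2 * n \<and> P t} \<union> (if P (2 * n) then {2 * n, 2 * n + 1} else {})"
    using Suc.prems[of n] less_Suc_eq by auto
  then have "card {t. t < 2 * Suc n \<and> P t} = card {t. t < 2 * n \<and> P t} + (if P (2 * n) then 2 else 0)"
    by (simp add: card_Un_disjoint)
  then show ?case using Suc by simp
qed

lemma (in linorder) bij_betw_nth_sorted_key_list_of_set: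
  assumes "finite L" "inj_on f L"
  shows "bij_betw ((!) (sorted_key_list_of_set f L)) {..<card L} L"
proof -
  interpret folding_insort_key "(\<le>)" "(<)" L f
    by unfold_locales (rule assms(2))
  show ?thesis
    using distinct_if_distinct_map[OF distinct_sorted_key_list_of_set[OF subset_refl]]
    by (intro bij_betw_nth) (simp_all add: assms(1))
qed

lemma pf_eq_0_if_odd_separated_class:
  fixes r :: "'a \<Rightarrow> nat"
  assumes "finite L" "inj_on r L"
    and odd: "odd (card {l \<in> L. P l})"
    and separated: "\<And>a b. a \<in> L \<Longrightarrow> b \<in> L \<Longrightarrow> P a \<noteq> P b \<Longrightarrow> A a b = 0"
  shows "pf r A L = 0"
proof (cases "odd (card L)")
  case True
  then show ?thesis by (simp add: pf_def)
next
  case False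
  define xs where "xs = sorted_key_list_of_set r L"
  define n where "n = card L div 2"
  have card_L: "card L = 2 * n" using False n_def by simp
  have matching_vanishes: "(\<Prod>k<n. A (xs ! \<sigma> (2 * k)) (xs ! \<sigma> (2 * k + 1))) = 0"
    if "\<sigma> permutes {..<card L}" for \<sigma>
  proof (rule ccontr)
    assume "\<not> ?thesis"
    then have nz: "A (xs ! \<sigma> (2 * k)) (xs ! \<sigma> (2 * k + 1)) \<noteq> 0" if "k < n" for k
      using that by auto
    define g where "g t = xs ! \<sigma> t" for t
    have g: "bij_betw g {..<2 * n} L"
      using bij_betw_trans[OF permutes_imp_bij[OF that] bij_betw_nth_sorted_key_list_of_set[OF assms(1,2)]]
      unfolding g_def xs_def by (simp add: card_L comp_def)
    have "P (g (2 * k)) = P (g (2 * k + 1))" if "k < n" for k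
      using separated[of "g (2 * k)" "g (2 * k + 1)"] nz[OF that] bij_betwE[OF g] that
      by (auto simp: g_def)
    then have "even (card {t. t < 2 * n \<and> P (g t)})"
      by (rule even_card_if_pairs_agree)
    moreover have "{l \<in> L. P l} = g ` {t. t < 2 * n \<and> P (g t)}"
      using g by (auto simp: bij_betw_def)
    moreover have "inj_on g {t. t < 2 * n \<and> P (g t)}"
      using g by (auto simp: bij_betw_def intro: inj_on_subset)
    ultimately show False
      using odd by (simp add: card_image)
  qed
  have "(\<Sum>\<sigma>\<in>{\<sigma>. \<sigma> permutes {..<card L}}.
          of_int (sign \<sigma>) * (\<Prod>k<n. A (xs ! \<sigma> (2 * k)) (xs ! \<sigma> (2 * k + 1)))) = 0"
    using matching_vanishes by (intro sum.neutral) simp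
  then show ?thesis
    using False unfolding pf_def Let_def xs_def[symmetric] n_def[symmetric] by simp
qed

lemma pf_reduced_antisym: "pf_reduced r A K i j = - pf_reduced r A K j i"
  unfolding pf_reduced_def by (simp add: insert_commute)

lemma simple_graph_edgeE:
  assumes "simple_graph V E" "e \<in> E"
  obtains x y where "x \<noteq> y" "x \<in> V" "y \<in> V" "e = {x, y}"
  using assms unfolding simple_graph_def by blast

lemma simple_graph_edges_subset: "simple_graph V E \<Longrightarrow> E \<subseteq> Pow V"
  by (auto elim: simple_graph_edgeE)

lemma finite_darts:
  assumes "simple_graph V E"
  shows "finite (darts V E)"
proof -
  have "finite V" using assms unfolding simple_graph_def by blast
  then have "finite (V \<times> E)"
    using finite_subset[OF simple_graph_edges_subset[OF assms]] by blast
  then show ?thesis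
    by (rule finite_subset[rotated]) (auto simp: darts_def)
qed

lemma even_card_darts_if_constant_on_edges:
  assumes "simple_graph V E"
    and edge_constant: "\<And>e x y. e \<in> E \<Longrightarrow> x \<in> e \<Longrightarrow> y \<in> e \<Longrightarrow> Q x = Q y"
  shows "even (card {d \<in> darts V E. Q (fst d)})"
proof -
  have E: "E \<subseteq> Pow V" "finite E"
    using simple_graph_edges_subset[OF assms(1)] assms(1)
    by (auto simp: simple_graph_def intro: finite_subset)
  have finite_edge: "finite e" if "e \<in> E" for e
    using E(1) assms(1) that by (auto simp: simple_graph_def intro: finite_subset)
  have "{d \<in> darts V E. Q (fst d)} = (\<lambda>(e, x). (x, e)) ` (SIGMA e:E. {x \<in> e. Q x})"
    using E(1) by (auto simp: darts_def)
  moreover have "inj_on (\<lambda>(e, x). (x, e)) (SIGMA e:E. {x \<in> e. Q x})"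
    by (auto simp: inj_on_def)
  ultimately have "card {d \<in> darts V E. Q (fst d)} = (\<Sum>e\<in>E. card {x \<in> e. Q x})"
    using E(2) finite_edge by (simp add: card_image card_SigmaI)
  moreover have "even (card {x \<in> e. Q x})" if e: "e \<in> E" for e
  proof -
    obtain x y where "x \<noteq> y" "e = {x, y}"
      using simple_graph_edgeE[OF assms(1) e] by blast
    moreover have "{z \<in> e. Q z} = (if Q x then e else {})"
      using edge_constant[OF e, of x y] \<open>e = {x, y}\<close> by auto
    ultimately show ?thesis
      by simp
  qed
  ultimately show ?thesis
    by (simp add: dvd_sum)
qed

lemma minor_transformation_contracted_edge:
  assumes "simple_graph V2 E2" "minor_transformation V2 E2 V1 E1 Ed Ec phi"
    and "e \<in> Ec" "x \<in> e" "y \<in> e"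
  shows "phi x = phi y"
proof -
  have Ec: "Ec \<subseteq> E2"
    and comp: "\<forall>x\<in>V2. \<forall>y\<in>V2. phi x = phi y \<longleftrightarrow> same_component V2 Ec x y"
    using assms(2) unfolding minor_transformation_def by blast+
  obtain u v where uv: "u \<in> V2" "v \<in> V2" "e = {u, v}"
    using simple_graph_edgeE[OF assms(1)] Ec assms(3) by blast
  then have "same_component V2 Ec u v"
    unfolding same_component_def using assms(3) by (intro r_into_rtrancl) auto
  then have "phi u = phi v"
    using comp uv by blast
  then show ?thesis
    using uv assms(4,5) by auto
qed

lemma minor_transformation_kept_edge_inj:
  assumes "simple_graph V1 E1" "simple_graph V2 E2" "minor_transformation V2 E2 V1 E1 Ed Ec phi"
    and "e \<in> E2 - (Ec \<union> Ed)"
  shows "inj_on phi e"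
proof -
  have "phi ` e \<in> E1"
    using assms(3,4) unfolding minor_transformation_def by (blast dest: bij_betwE)
  then have "card (phi ` e) = 2"
    by (auto elim: simple_graph_edgeE[OF assms(1)])
  moreover have "card e = 2" "finite e"
    using assms(4) by (auto elim: simple_graph_edgeE[OF assms(2)])
  ultimately show ?thesis
    by (simp add: eq_card_imp_inj_on card_image_le inj_on_iff_eq_card)
qed

lemma minor_transformation_bij_betw_darts:
  assumes "simple_graph V1 E1" "simple_graph V2 E2" "minor_transformation V2 E2 V1 E1 Ed Ec phi"
  shows "bij_betw (\<lambda>(x, e). (phi x, phi ` e)) {d \<in> darts V2 E2. snd d \<notin> Ec \<union> Ed} (darts V1 E1)"
proof -
  have phi_V: "phi ` V2 = V1"
    and bij_E: "bij_betw (\<lambda>e. phi ` e) (E2 - (Ec \<union> Ed)) E1"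
    using assms(3) unfolding minor_transformation_def by blast+
  have inj_e: "inj_on phi e" if "e \<in> E2 - (Ec \<union> Ed)" for e
    using minor_transformation_kept_edge_inj[OF assms that] .
  have E2: "E2 \<subseteq> Pow V2"
    using simple_graph_edges_subset[OF assms(2)] .
  show ?thesis
  proof (rule bij_betw_imageI)
    show "inj_on (\<lambda>(x, e). (phi x, phi ` e)) {d \<in> darts V2 E2. snd d \<notin> Ec \<union> Ed}"
      using bij_E inj_e
      by (auto simp: inj_on_def darts_def bij_betw_def)
    show "(\<lambda>(x, e). (phi x, phi ` e)) ` {d \<in> darts V2 E2. snd d \<notin> Ec \<union> Ed} = darts V1 E1"
    proof
      show "(\<lambda>(x, e). (phi x, phi ` e)) ` {d \<in> darts V2 E2. snd d \<notin> Ec \<union> Ed} \<subseteq> darts V1 E1"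
        using phi_V bij_betwE[OF bij_E] by (auto simp: darts_def)
      show "darts V1 E1 \<subseteq> (\<lambda>(x, e). (phi x, phi ` e)) ` {d \<in> darts V2 E2. snd d \<notin> Ec \<union> Ed}"
      proof
        fix d assume "d \<in> darts V1 E1"
        then obtain e x where "e \<in> E2 - (Ec \<union> Ed)" "x \<in> e" "d = (phi x, phi ` e)"
          using bij_betw_imp_surj_on[OF bij_E] by (auto simp: darts_def)
        then show "d \<in> (\<lambda>(x, e). (phi x, phi ` e)) ` {d \<in> darts V2 E2. snd d \<notin> Ec \<union> Ed}"
          using E2 by (auto simp: darts_def image_iff intro!: bexI[of _ "(x, e)"])
      qed
    qed
  qed
qed

lemma pf_contracted_union_eq_0:
  assumes G2: "simple_graph V2 E2"
    and minor: "minor_transformation V2 E2 V1 E1 Ed Ec phi"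
    and order: "inj_on r (darts V2 E2)"
    and inc: "incidence_matrix V2 E2 A"
    and del0: "\<forall>d1\<in>darts V2 E2. \<forall>d2\<in>darts V2 E2.
                 snd d1 \<in> Ed \<or> snd d2 \<in> Ed \<longrightarrow> A d1 d2 = 0"
    and i: "i \<in> darts V2 E2" "snd i \<notin> Ec \<union> Ed"
    and j: "j \<in> darts V2 E2"
    and apart: "phi (fst i) \<noteq> phi (fst j)" "snd i \<noteq> snd j"
  shows "pf r A ({d \<in> darts V2 E2. snd d \<in> Ec \<union> Ed} \<union> {i, j}) = 0"
proof -
  define K where "K = {d \<in> darts V2 E2. snd d \<in> Ec \<union> Ed}"
  define L where "L = K \<union> {i, j}"
  define P where "P l \<longleftrightarrow> snd l \<notin> Ed \<and> phi (fst l) = phi (fst i)" for l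
  have Ec: "Ec \<subseteq> E2" and disjoint: "Ed \<inter> Ec = {}"
    using minor unfolding minor_transformation_def by blast+
  have L: "L \<subseteq> darts V2 E2"
    using i j unfolding L_def K_def by blast
  have separated: "A a b = 0" if ab: "a \<in> L" "b \<in> L" "P a \<noteq> P b" for a b
  proof (rule ccontr)
    assume nz: "A a b \<noteq> 0"
    with del0 ab L have kept: "snd a \<notin> Ed" "snd b \<notin> Ed"
      by blast+
    with ab have phi_ab: "phi (fst a) \<noteq> phi (fst b)"
      unfolding P_def by auto
    have "dart_adj a b"
      using inc nz ab L unfolding incidence_matrix_def by blast
    with phi_ab have "a \<noteq> b" "snd a = snd b"
      unfolding dart_adj_def by auto
    moreover have "snd a \<notin> Ec"
      using minor_transformation_contracted_edge[OF G2 minor _ _ _] phi_ab ab L \<open>snd a = snd b\<close>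
      by (fastforce simp: darts_def)
    ultimately have "a \<in> {i, j}" "b \<in> {i, j}"
      using ab kept unfolding L_def K_def by auto
    then show False
      using \<open>a \<noteq> b\<close> \<open>snd a = snd b\<close> apart(2) by auto
  qed
  define D where "D = {d \<in> darts V2 Ec. phi (fst d) = phi (fst i)}"
  have "even (card D)"
    unfolding D_def
  proof (rule even_card_darts_if_constant_on_edges)
    show "simple_graph V2 Ec"
      using G2 Ec unfolding simple_graph_def by blast
    show "phi x = phi (fst i) \<longleftrightarrow> phi y = phi (fst i)" if "e \<in> Ec" "x \<in> e" "y \<in> e" for e x y
      using minor_transformation_contracted_edge[OF G2 minor that] by simp
  qed
  moreover have "{l \<in> L. P l} = insert i D"
    using i j apart(1) Ec disjoint unfolding L_def K_def P_def D_def darts_def by auto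
  moreover have "i \<notin> D"
    using i unfolding D_def darts_def by auto
  moreover have "finite D"
    by (rule finite_subset[OF _ finite_darts[OF G2]]) (use Ec in \<open>auto simp: D_def darts_def\<close>)
  ultimately have "odd (card {l \<in> L. P l})"
    by simp
  moreover have "finite L" "inj_on r L"
    using L finite_darts[OF G2] order by (auto intro: finite_subset inj_on_subset)
  ultimately have "pf r A L = 0"
    using pf_eq_0_if_odd_separated_class separated by blast
  then show ?thesis
    unfolding L_def K_def .
qed

lemma incidence_matrix_transfer:
  assumes bij: "bij_betw f S (darts V E)"
    and antisym: "\<And>i j. i \<in> S \<Longrightarrow> j \<in> S \<Longrightarrow> B i j = - B j i"
    and vanish: "\<And>i j. i \<in> S \<Longrightarrow> j \<in> S \<Longrightarrow> \<not> dart_adj (f i) (f j) \<Longrightarrow> B i j = 0"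
  shows "incidence_matrix V E (\<lambda>d d'. B (inv_into S f d) (inv_into S f d'))"
proof -
  have "inv_into S f d \<in> S" "f (inv_into S f d) = d" if "d \<in> darts V E" for d
    using bij that by (auto simp: bij_betw_def inv_into_into f_inv_into_f)
  then show ?thesis
    unfolding incidence_matrix_def using antisym vanish by metis
qed

theorem proposition2p13:
  fixes V1 :: "'w set" and E1 :: "'w set set"
    and V2 :: "'v set" and E2 :: "'v set set"
    and Ed Ec :: "'v set set" and phi :: "'v \<Rightarrow> 'w"
    and r :: "('v \<times> 'v set) \<Rightarrow> nat"
    and A :: "('v \<times> 'v set) \<Rightarrow> ('v \<times> 'v set) \<Rightarrow> complex"
  assumes G1: "simple_graph V1 E1"
    and G2: "simple_graph V2 E2"
    and minor: "minor_transformation V2 E2 V1 E1 Ed Ec phi"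
    and order: "inj_on r (darts V2 E2)"
    and inc: "incidence_matrix V2 E2 A"
    and del0: "\<forall>d1\<in>darts V2 E2. \<forall>d2\<in>darts V2 E2.
                 snd d1 \<in> Ed \<or> snd d2 \<in> Ed \<longrightarrow> A d1 d2 = 0"
  defines "K \<equiv> {d \<in> darts V2 E2. snd d \<in> Ec \<union> Ed}"
    and "Kbar \<equiv> {d \<in> darts V2 E2. snd d \<notin> Ec \<union> Ed}"
    and "f \<equiv> (\<lambda>(x, e). (phi x, phi ` e))"
  shows "bij_betw f Kbar (darts V1 E1) \<and>
         incidence_matrix V1 E1
           (\<lambda>d d'. pf_reduced r A K (inv_into Kbar f d) (inv_into Kbar f d'))"
proof
  show bij: "bij_betw f Kbar (darts V1 E1)"
    unfolding f_def Kbar_def using minor_transformation_bij_betw_darts[OF G1 G2 minor] .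
  have f_apply: "f d = (phi (fst d), phi ` snd d)" for d
    unfolding f_def by (simp add: case_prod_beta)
  have "pf_reduced r A K i j = 0" if ij: "i \<in> Kbar" "j \<in> Kbar" "\<not> dart_adj (f i) (f j)" for i j
  proof (cases "i = j")
    case True
    then show ?thesis by (simp add: pf_reduced_def)
  next
    case False
    then have "f i \<noteq> f j"
      using inj_onD[OF bij_betw_imp_inj_on[OF bij] _ ij(1,2)] by blast
    with ij(3) have apart: "phi (fst i) \<noteq> phi (fst j)" "snd i \<noteq> snd j"
      unfolding dart_adj_def f_apply by auto
    have "i \<in> darts V2 E2" "snd i \<notin> Ec \<union> Ed" "j \<in> darts V2 E2"
      using ij(1,2) unfolding Kbar_def by auto
    then have "pf r A (K \<union> {i, j}) = 0"
      unfolding K_def by (rule pf_contracted_union_eq_0[OF G2 minor order inc del0 _ _ _ apart])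
    then show ?thesis
      by (simp add: pf_reduced_def)
  qed
  then show "incidence_matrix V1 E1 (\<lambda>d d'. pf_reduced r A K (inv_into Kbar f d) (inv_into Kbar f d'))"
    by (rule incidence_matrix_transfer[OF bij pf_reduced_antisym])
qed

end
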